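(* Let $R$ be a commutative ring with identity and let $\boldsymbol{a}=(a_0,a_1,a_2,\dots)\in H_R$ with $a_0\in R^*$. Then $\lambda_{+,0}(\boldsymbol{a})=(0,a_0,a_1,\dots)$ is invertible with respect to $\circ$, and $$\boldsymbol{a}^{-1}=\lambda_{-}\big(\lambda_{+,0}(\boldsymbol{a})^{(-1)}\big)\circ\lambda_{+,0}(\boldsymbol{a}),$$ where $\boldsymbol{a}^{-1}$ is the inverse of $\boldsymbol{a}$ for the Hurwitz product and $\boldsymbol{c}^{(-1)}$ denotes the inverse of $\boldsymbol{c}$ for $\circ$.
   Context: $R^*$ is the group of units of $R$. $H_R$ is the set of sequences $\boldsymbol{a}=(a_n)_{n\ge0}$ with $a_n\in R$; we write $\boldsymbol{a}[n]=a_n$. The Hurwitz product is $(\boldsymbol{a}\star\boldsymbol{b})_n=\sum_{h=0}^n\binom{n}{h}a_hb_{n-h}$, with identity $\bar{\boldsymbol{1}}=(1,0,0,\dots)$; $\boldsymbol{a}$ is $\star$-invertible iff $a_0\in R^*$, and $\boldsymbol{a}^{-1}$ denotes its $\star$-inverse. The exponential partial Bell polynomials are $Y_{0,0}=1$, $Y_{n,0}=0$ ($n\ge1$), $Y_{0,k}=0$ ($k\ge1$), and $Y_{n,k}(y_1,y_2,\dots)=\sum \frac{n!}{\prod_i j_i!\,(i!)^{j_i}}\prod_i y_i^{j_i}$, the sum over $(j_1,j_2,\dots)$ of nonnegative integers with $\sum_i j_i=k$, $\sum_i ij_i=n$ (integer coefficients). For $\boldsymbol{a}\in H_R$ and $\boldsymbol{b}\in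 H_R$ with $b_0=0$, the composition product is $(\boldsymbol{a}\circ\boldsymbol{b})_n=\sum_{k=0}^n a_k Y_{n,k}(b_1,\dots,b_{n-k+1})$ (when $\mathbb{Q}\subseteq R$ this is the sequence whose exponential generating function $\sum_n c_nt^n/n!$ is $A(B(t))$, $A,B$ the e.g.f.s of $\boldsymbol a,\boldsymbol b$). Its identity is $\boldsymbol{1}=(0,1,0,0,\dots)$; $\boldsymbol{b}$ is $\circ$-invertible iff $b_0=0$ and $b_1\in R^*$. The shift is $\lambda_-(a_0,a_1,a_2,\dots)=(a_1,a_2,\dots)$ and $\lambda_{+,0}(a_0,a_1,\dots)=(0,a_0,a_1,\dots)$. *)

theory Defs
  imports Main
begin

definition hurwitz_prod :: "(nat \<Rightarrow> 'a::comm_ring_1) \<Rightarrow> (nat \<Rightarrow> 'a) \<Rightarrow> nat \<Rightarrow> 'a" where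
  "hurwitz_prod a b n = (\<Sum>h\<le>n. of_nat (n choose h) * a h * b (n - h))"

definition hurwitz_one :: "nat \<Rightarrow> 'a::comm_ring_1" where
  "hurwitz_one n = (if n = 0 then 1 else 0)"

definition hurwitz_inv :: "(nat \<Rightarrow> 'a::comm_ring_1) \<Rightarrow> nat \<Rightarrow> 'a" where
  "hurwitz_inv a = (SOME c. hurwitz_prod a c = hurwitz_one)"

text \<open>Index set of the exponential partial Bell polynomial Y_{n,k}: tuples (j_1,j_2,...)
  (j_i = 0 for i outside 1..n) with sum j_i = k and sum i*j_i = n.\<close>
definition bell_index :: "nat \<Rightarrow> nat \<Rightarrow> (nat \<Rightarrow> nat) set" where
  "bell_index n k = {j. (\<forall>i. (i < 1 \<or> n < i) \<longrightarrow> j i = 0) \<and> (\<forall>i. j i \<le> n)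
      \<and> (\<Sum>i=1..n. j i) = k \<and> (\<Sum>i=1..n. i * j i) = n}"

definition bell_poly :: "nat \<Rightarrow> nat \<Rightarrow> (nat \<Rightarrow> 'a::comm_ring_1) \<Rightarrow> 'a" where
  "bell_poly n k y = (\<Sum>j\<in>bell_index n k.
      of_nat (fact n div (\<Prod>i=1..n. fact (j i) * fact i ^ j i)) * (\<Prod>i=1..n. y i ^ j i))"

definition comp_prod :: "(nat \<Rightarrow> 'a::comm_ring_1) \<Rightarrow> (nat \<Rightarrow> 'a) \<Rightarrow> nat \<Rightarrow> 'a" where
  "comp_prod a b n = (\<Sum>k\<le>n. a k * bell_poly n k b)"

definition comp_one :: "nat \<Rightarrow> 'a::comm_ring_1" where
  "comp_one n = (if n = 1 then 1 else 0)"

definition comp_invertible :: "(nat \<Rightarrow> 'a::comm_ring_1) \<Rightarrow> bool" where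
  "comp_invertible b \<longleftrightarrow> (\<exists>c. comp_prod b c = comp_one \<and> comp_prod c b = comp_one)"

definition comp_inv :: "(nat \<Rightarrow> 'a::comm_ring_1) \<Rightarrow> nat \<Rightarrow> 'a" where
  "comp_inv b = (SOME c. comp_prod b c = comp_one \<and> comp_prod c b = comp_one)"

definition shift_minus :: "(nat \<Rightarrow> 'a) \<Rightarrow> nat \<Rightarrow> 'a" where
  "shift_minus a n = a (Suc n)"

definition shift_plus0 :: "(nat \<Rightarrow> 'a::zero) \<Rightarrow> nat \<Rightarrow> 'a" where
  "shift_plus0 a n = (if n = 0 then 0 else a (n - 1))"

end

theory Submission
  imports Defs
begin

text \<open>Read a sequence \<open>a\<close> as the exponential generating function \<open>\<Sum> a\<^sub>n t\<^sup>n / n!\<close>: the Hurwitz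
  product is then multiplication, the composition product substitution and \<open>shift_minus\<close>
  differentiation. Everything rests on the chain rule
  \<open>shift_minus (f \<circ> g) = (shift_minus f \<circ> g) \<star> shift_minus g\<close>, which over an arbitrary
  commutative ring follows from the recurrence \<open>Y(n+1,k+1) = \<Sum>\<^sub>i C(n,i) y(i+1) Y(n-i,k)\<close> of the
  Bell polynomials (classify the partitions of \<open>{0..n}\<close> by the block containing \<open>0\<close>).
  Induction along the chain rule shows that composition distributes over the Hurwitz product
  and is associative. A sequence \<open>b\<close> with \<open>b 0 = 0\<close> and \<open>b 1\<close> a unit has a left inverse for
  composition, computed triangularly since \<open>Y(n,n)(b) = (b 1)\<^sup>n\<close>, and hence a two-sided one.
  Finally, for \<open>b = shift_plus0 a\<close> with inverse \<open>c\<close>, differentiating \<open>c \<circ> b = comp_one\<close>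
  gives \<open>(shift_minus c \<circ> b) \<star> a = shift_minus comp_one = hurwitz_one\<close>.\<close>

section \<open>Partition types\<close>

text \<open>A member \<open>j\<close> of \<open>bell_index n k\<close> is the type of a partition of an \<open>n\<close>-set into \<open>k\<close>
  blocks: \<open>j l\<close> blocks have size \<open>l\<close>.\<close>

lemma bell_index_iff:
  "j \<in> bell_index n k \<longleftrightarrow>
     (\<forall>l. l \<notin> {1..n} \<longrightarrow> j l = 0) \<and> (\<Sum>l=1..n. j l) = k \<and> (\<Sum>l=1..n. l * j l) = n"
proof
  assume "j \<in> bell_index n k"
  then show "(\<forall>l. l \<notin> {1..n} \<longrightarrow> j l = 0) \<and> (\<Sum>l=1..n. j l) = k \<and> (\<Sum>l=1..n. l * j l) = n"
    unfolding bell_index_def by (auto simp: not_le[symmetric])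
next
  assume H: "(\<forall>l. l \<notin> {1..n} \<longrightarrow> j l = 0) \<and> (\<Sum>l=1..n. j l) = k \<and> (\<Sum>l=1..n. l * j l) = n"
  have "j l \<le> n" for l
  proof (cases "l \<in> {1..n}")
    case True
    then have "j l \<le> l * j l" by simp
    also have "\<dots> \<le> (\<Sum>i=1..n. i * j i)" using True by (intro member_le_sum) auto
    finally show ?thesis using H by simp
  qed (use H in simp)
  with H show "j \<in> bell_index n k"
    unfolding bell_index_def by (auto simp: not_le)
qed

lemma finite_bell_index: "finite (bell_index n k)"
proof (rule finite_subset)
  show "bell_index n k \<subseteq> {j. \<forall>l. (l \<in> {1..n} \<longrightarrow> j l \<in> {0..n}) \<and> (l \<notin> {1..n} \<longrightarrow> j l = 0)}"
    unfolding bell_index_def by (auto simp: not_le[symmetric])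
qed (rule finite_set_of_finite_funs, simp_all)

lemma bell_index_0: "bell_index 0 k = (if k = 0 then {\<lambda>_. 0} else {})"
  by (auto simp: bell_index_iff)

lemma bell_index_Suc_0: "bell_index (Suc n) 0 = {}"
  by (auto simp: bell_index_iff)

lemma bell_index_empty:
  assumes "n < k"
  shows "bell_index n k = {}"
proof (intro equals0I)
  fix j assume "j \<in> bell_index n k"
  then have "k = (\<Sum>l=1..n. j l)" "(\<Sum>l=1..n. l * j l) = n" by (simp_all add: bell_index_iff)
  moreover have "(\<Sum>l=1..n. j l) \<le> (\<Sum>l=1..n. l * j l)" by (intro sum_mono) simp
  ultimately show False using assms by simp
qed

lemma support_below_weight:
  fixes j :: "nat \<Rightarrow> nat"
  assumes "\<forall>l. l \<notin> {1..M} \<longrightarrow> j l = 0" "(\<Sum>l=1..M. l * j l) = n"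
  shows "\<forall>l. l \<notin> {1..n} \<longrightarrow> j l = 0"
proof (intro allI impI)
  fix l assume l: "l \<notin> {1..n}"
  show "j l = 0"
  proof (rule ccontr)
    assume nz: "j l \<noteq> 0"
    then have lM: "l \<in> {1..M}" using assms(1) by metis
    have "l \<le> l * j l" using nz by simp
    also have "\<dots> \<le> (\<Sum>i=1..M. i * j i)" using lM by (rule member_le_sum) simp_all
    finally have "l \<le> n" using assms(2) by simp
    with lM l show False by simp
  qed
qed

lemma bell_index_iff_wide:
  assumes "n \<le> M"
  shows "j \<in> bell_index n k \<longleftrightarrow>
     (\<forall>l. l \<notin> {1..M} \<longrightarrow> j l = 0) \<and> (\<Sum>l=1..M. j l) = k \<and> (\<Sum>l=1..M. l * j l) = n"
proof -
  have sums_eq: "(\<Sum>l=1..M. j l) = (\<Sum>l=1..n. j l) \<and> (\<Sum>l=1..M. l * j l) = (\<Sum>l=1..n. l * j l)"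
    if "\<forall>l. l \<notin> {1..n} \<longrightarrow> j l = 0" using that assms by (auto intro: sum.mono_neutral_right)
  show ?thesis
  proof
    assume "j \<in> bell_index n k"
    then have supp: "\<forall>l. l \<notin> {1..n} \<longrightarrow> j l = 0" and "(\<Sum>l=1..n. j l) = k" "(\<Sum>l=1..n. l * j l) = n"
      unfolding bell_index_iff by simp_all
    moreover from supp assms have "\<forall>l. l \<notin> {1..M} \<longrightarrow> j l = 0" by auto
    ultimately show "(\<forall>l. l \<notin> {1..M} \<longrightarrow> j l = 0) \<and> (\<Sum>l=1..M. j l) = k \<and> (\<Sum>l=1..M. l * j l) = n"
      using sums_eq by simp
  next
    assume rhs: "(\<forall>l. l \<notin> {1..M} \<longrightarrow> j l = 0) \<and> (\<Sum>l=1..M. j l) = k \<and> (\<Sum>l=1..M. l * j l) = n"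
    then have "\<forall>l. l \<notin> {1..n} \<longrightarrow> j l = 0" using support_below_weight[of M j n] by simp
    with rhs sums_eq show "j \<in> bell_index n k" unfolding bell_index_iff by simp
  qed
qed

lemma sum_fun_upd_Suc:
  assumes "finite A" "a \<in> A" "g a (Suc (j a)) = c + g a (j a)"
  shows "(\<Sum>l\<in>A. g l ((j(a := Suc (j a))) l)) = c + (\<Sum>l\<in>A. g l (j l))"
proof -
  have "(\<Sum>l\<in>A. g l ((j(a := Suc (j a))) l)) = g a (Suc (j a)) + (\<Sum>l\<in>A - {a}. g l (j l))"
    using assms(1,2) by (simp add: sum.remove)
  also have "\<dots> = c + (\<Sum>l\<in>A. g l (j l))"
    using assms by (simp add: sum.remove add.assoc)
  finally show ?thesis .
qed

lemma prod_fun_upd_Suc: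
  assumes "finite A" "a \<in> A" "g a (Suc (j a)) = c * g a (j a)"
  shows "(\<Prod>l\<in>A. g l ((j(a := Suc (j a))) l)) = c * (\<Prod>l\<in>A. g l (j l))"
proof -
  have "(\<Prod>l\<in>A. g l ((j(a := Suc (j a))) l)) = g a (Suc (j a)) * (\<Prod>l\<in>A - {a}. g l (j l))"
    using assms(1,2) by (simp add: prod.remove)
  also have "\<dots> = c * (\<Prod>l\<in>A. g l (j l))"
    using assms by (simp add: prod.remove mult.assoc)
  finally show ?thesis .
qed

definition add_part :: "(nat \<Rightarrow> nat) \<Rightarrow> nat \<Rightarrow> nat \<Rightarrow> nat" where
  "add_part j p = j(p := Suc (j p))"

definition remove_part :: "(nat \<Rightarrow> nat) \<Rightarrow> nat \<Rightarrow> nat \<Rightarrow> nat" where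
  "remove_part j p = j(p := j p - 1)"

lemma remove_add_part: "remove_part (add_part j p) p = j"
  by (auto simp: add_part_def remove_part_def)

lemma add_remove_part: "0 < j p \<Longrightarrow> add_part (remove_part j p) p = j"
  by (auto simp: add_part_def remove_part_def)

lemma bell_index_add_part:
  assumes "j \<in> bell_index (n - i) k" "i \<le> n"
  shows "add_part j (Suc i) \<in> bell_index (Suc n) (Suc k)"
proof -
  have j: "\<forall>l. l \<notin> {1..Suc n} \<longrightarrow> j l = 0" "(\<Sum>l=1..Suc n. j l) = k" "(\<Sum>l=1..Suc n. l * j l) = n - i"
    using assms(1) bell_index_iff_wide[of "n - i" "Suc n"] by simp_all
  have a: "Suc i \<in> {1..Suc n}" using assms(2) by simp
  have "\<forall>l. l \<notin> {1..Suc n} \<longrightarrow> add_part j (Suc i) l = 0"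
    using j(1) a by (auto simp: add_part_def)
  moreover have "(\<Sum>l=1..Suc n. add_part j (Suc i) l) = Suc k"
    unfolding add_part_def using sum_fun_upd_Suc[OF _ a, of "\<lambda>l v. v" j 1] j(2) by simp
  moreover have "(\<Sum>l=1..Suc n. l * add_part j (Suc i) l) = Suc n"
    unfolding add_part_def using sum_fun_upd_Suc[OF _ a, of "\<lambda>l v. l * v" j "Suc i"] j(3) assms(2)
    by simp
  ultimately show ?thesis by (simp add: bell_index_iff)
qed

lemma bell_index_remove_part:
  assumes "j \<in> bell_index (Suc n) (Suc k)" "i \<le> n" "0 < j (Suc i)"
  shows "remove_part j (Suc i) \<in> bell_index (n - i) k"
proof -
  define j' where "j' = remove_part j (Suc i)"
  have j_eq: "j = j'(Suc i := Suc (j' (Suc i)))"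
    using add_remove_part[of j "Suc i", OF assms(3)] unfolding j'_def add_part_def by simp
  have j: "\<forall>l. l \<notin> {1..Suc n} \<longrightarrow> j l = 0" "(\<Sum>l=1..Suc n. j l) = Suc k" "(\<Sum>l=1..Suc n. l * j l) = Suc n"
    using assms(1) by (simp_all add: bell_index_iff)
  have a: "Suc i \<in> {1..Suc n}" using assms(2) by simp
  have "\<forall>l. l \<notin> {1..Suc n} \<longrightarrow> j' l = 0"
    using j(1) a by (auto simp: j'_def remove_part_def)
  moreover have "(\<Sum>l=1..Suc n. j' l) = k"
    using sum_fun_upd_Suc[OF _ a, of "\<lambda>l v. v" j' 1] j(2) j_eq by simp
  moreover have "(\<Sum>l=1..Suc n. l * j' l) = n - i"
    using sum_fun_upd_Suc[OF _ a, of "\<lambda>l v. l * v" j' "Suc i"] j(3) j_eq by simp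
  ultimately show ?thesis
    unfolding j'_def[symmetric] using bell_index_iff_wide[of "n - i" "Suc n"] by simp
qed

section \<open>Bell polynomials\<close>

text \<open>\<open>fact n div bell_denom j n\<close> is the number of partitions of an \<open>n\<close>-set of type \<open>j\<close>.\<close>

definition bell_denom :: "(nat \<Rightarrow> nat) \<Rightarrow> nat \<Rightarrow> nat" where
  "bell_denom j n = (\<Prod>l=1..n. fact (j l) * fact l ^ j l)"

definition bell_monomial :: "(nat \<Rightarrow> 'a::comm_ring_1) \<Rightarrow> (nat \<Rightarrow> nat) \<Rightarrow> nat \<Rightarrow> 'a" where
  "bell_monomial y j n = (\<Prod>l=1..n. y l ^ j l)"

lemma bell_poly_eq:
  "bell_poly n k y = (\<Sum>j\<in>bell_index n k. of_nat (fact n div bell_denom j n) * bell_monomial y j n)"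
  unfolding bell_poly_def bell_denom_def bell_monomial_def ..

lemma bell_denom_pos: "0 < bell_denom j n"
  by (simp add: bell_denom_def)

lemma
  assumes "j \<in> bell_index (Suc n) (Suc k)" "i \<le> n" "0 < j (Suc i)"
  shows bell_denom_remove_part:
      "bell_denom j (Suc n) = bell_denom (remove_part j (Suc i)) (n - i) * (j (Suc i) * fact (Suc i))"
    and bell_monomial_remove_part:
      "bell_monomial y j (Suc n) = y (Suc i) * bell_monomial y (remove_part j (Suc i)) (n - i)"
proof -
  define j' where "j' = remove_part j (Suc i)"
  have j_eq: "j = j'(Suc i := Suc (j' (Suc i)))"
    using add_remove_part[of j "Suc i", OF assms(3)] unfolding j'_def add_part_def by simp
  have a: "Suc i \<in> {1..Suc n}" using assms(2) by simp
  have supp: "\<forall>l. l \<notin> {1..n - i} \<longrightarrow> j' l = 0"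
    using bell_index_remove_part[OF assms] unfolding j'_def bell_index_iff by blast
  have ji: "j (Suc i) = Suc (j' (Suc i))" using j_eq by simp
  have "bell_denom j (Suc n) = (j (Suc i) * fact (Suc i)) * (\<Prod>l=1..Suc n. fact (j' l) * fact l ^ j' l)"
    unfolding bell_denom_def ji unfolding j_eq by (rule prod_fun_upd_Suc[OF _ a]) (simp_all add: algebra_simps)
  also have "(\<Prod>l=1..Suc n. fact (j' l) * fact l ^ j' l) = bell_denom j' (n - i)"
    unfolding bell_denom_def using supp by (intro prod.mono_neutral_right) auto
  finally show "bell_denom j (Suc n) = bell_denom j' (n - i) * (j (Suc i) * fact (Suc i))"
    by simp
  have "bell_monomial y j (Suc n) = y (Suc i) * (\<Prod>l=1..Suc n. y l ^ j' l)"
    unfolding bell_monomial_def unfolding j_eq by (rule prod_fun_upd_Suc[OF _ a]) simp_all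
  also have "(\<Prod>l=1..Suc n. y l ^ j' l) = bell_monomial y j' (n - i)"
    unfolding bell_monomial_def using supp by (intro prod.mono_neutral_right) auto
  finally show "bell_monomial y j (Suc n) = y (Suc i) * bell_monomial y j' (n - i)" .
qed

text \<open>Counting the partitions of \<open>{0..n}\<close> of type \<open>j\<close> by the size \<open>i + 1\<close> of the block
  containing \<open>0\<close>.\<close>

lemma bell_denom_mult_coeff_sum:
  assumes j: "j \<in> bell_index (Suc n) (Suc k)"
    and dvd: "\<And>i. i \<le> n \<Longrightarrow> 0 < j (Suc i) \<Longrightarrow>
      bell_denom (remove_part j (Suc i)) (n - i) dvd fact (n - i)"
  shows "bell_denom j (Suc n) * (\<Sum>i\<in>{i\<in>{..n}. 0 < j (Suc i)}.
      (n choose i) * (fact (n - i) div bell_denom (remove_part j (Suc i)) (n - i))) = fact (Suc n)"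
proof -
  have summand: "bell_denom j (Suc n) * ((n choose i) * (fact (n - i) div bell_denom (remove_part j (Suc i)) (n - i)))
      = fact n * (Suc i * j (Suc i))"
    if i: "i \<le> n" "0 < j (Suc i)" for i
  proof -
    define d where "d = bell_denom (remove_part j (Suc i)) (n - i)"
    have d: "fact (n - i) div d * d = fact (n - i)"
      using dvd[OF i] unfolding d_def by simp
    have "bell_denom j (Suc n) * ((n choose i) * (fact (n - i) div d))
        = (n choose i) * (fact (n - i) div d * d) * (j (Suc i) * fact (Suc i))"
      unfolding bell_denom_remove_part[OF j i] d_def by (simp only: ac_simps)
    also have "\<dots> = (fact i * fact (n - i) * (n choose i)) * (Suc i * j (Suc i))"
      unfolding d by (simp only: fact_Suc of_nat_id ac_simps)
    also have "fact i * fact (n - i) * (n choose i) = fact n"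
      by (rule binomial_fact_lemma[OF i(1)])
    finally show ?thesis unfolding d_def .
  qed
  have "bell_denom j (Suc n) * (\<Sum>i\<in>{i\<in>{..n}. 0 < j (Suc i)}.
      (n choose i) * (fact (n - i) div bell_denom (remove_part j (Suc i)) (n - i)))
    = (\<Sum>i\<in>{i\<in>{..n}. 0 < j (Suc i)}. fact n * (Suc i * j (Suc i)))"
    unfolding sum_distrib_left by (intro sum.cong) (simp_all add: summand)
  also have "\<dots> = fact n * (\<Sum>i\<le>n. Suc i * j (Suc i))"
    unfolding sum_distrib_left by (intro sum.mono_neutral_left) auto
  also have "(\<Sum>i\<le>n. Suc i * j (Suc i)) = (\<Sum>l=1..Suc n. l * j l)"
    by (simp only: atMost_atLeast0 One_nat_def sum.shift_bounds_cl_Suc_ivl)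
  also have "\<dots> = Suc n"
    using j by (simp add: bell_index_iff)
  finally show ?thesis by (simp add: fact_Suc)
qed

lemma bell_denom_dvd_fact: "j \<in> bell_index n k \<Longrightarrow> bell_denom j n dvd fact n"
proof (induction n arbitrary: k j rule: less_induct)
  case (less n)
  show ?case
  proof (cases n)
    case 0
    with less.prems show ?thesis by (auto simp: bell_index_0 bell_denom_def)
  next
    case (Suc m)
    with less.prems obtain k' where j: "j \<in> bell_index (Suc m) (Suc k')"
      by (cases k) (auto simp: bell_index_Suc_0)
    have "bell_denom (remove_part j (Suc i)) (m - i) dvd fact (m - i)" if "i \<le> m" "0 < j (Suc i)" for i
      using less.IH[OF _ bell_index_remove_part[OF j that]] Suc by simp
    from bell_denom_mult_coeff_sum[OF j this] show ?thesis
      unfolding Suc by (rule dvdI[OF sym])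
  qed
qed

lemma bell_coeff_Suc:
  assumes j: "j \<in> bell_index (Suc n) (Suc k)"
  shows "fact (Suc n) div bell_denom j (Suc n) = (\<Sum>i\<in>{i\<in>{..n}. 0 < j (Suc i)}.
      (n choose i) * (fact (n - i) div bell_denom (remove_part j (Suc i)) (n - i)))"
proof -
  have "bell_denom j (Suc n) * (\<Sum>i\<in>{i\<in>{..n}. 0 < j (Suc i)}.
      (n choose i) * (fact (n - i) div bell_denom (remove_part j (Suc i)) (n - i))) = fact (Suc n)"
    using bell_denom_mult_coeff_sum[OF j] bell_denom_dvd_fact[OF bell_index_remove_part[OF j]] .
  from this[symmetric] show ?thesis
    using bell_denom_pos[of j "Suc n"] by simp
qed

lemma bell_poly_Suc_Suc:
  "bell_poly (Suc n) (Suc k) y = (\<Sum>i\<le>n. of_nat (n choose i) * y (Suc i) * bell_poly (n - i) k y)"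
proof -
  define B where "B = bell_index (Suc n) (Suc k)"
  define F where "F i j = of_nat (n choose i) * y (Suc i) *
    (of_nat (fact (n - i) div bell_denom (remove_part j (Suc i)) (n - i))
      * bell_monomial y (remove_part j (Suc i)) (n - i))" for i j
  have split_summand: "of_nat (fact (Suc n) div bell_denom j (Suc n)) * bell_monomial y j (Suc n)
      = (\<Sum>i\<in>{i\<in>{..n}. 0 < j (Suc i)}. F i j)" if j: "j \<in> B" for j
    unfolding bell_coeff_Suc[OF j[unfolded B_def]] of_nat_sum sum_distrib_right
  proof (rule sum.cong[OF refl])
    fix i assume "i \<in> {i\<in>{..n}. 0 < j (Suc i)}"
    then have i: "i \<le> n" "0 < j (Suc i)" by auto
    show "of_nat ((n choose i) * (fact (n - i) div bell_denom (remove_part j (Suc i)) (n - i)))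
        * bell_monomial y j (Suc n) = F i j"
      unfolding F_def bell_monomial_remove_part[OF j[unfolded B_def] i] by (simp add: ac_simps)
  qed
  have reindex: "(\<Sum>j\<in>{j\<in>B. 0 < j (Suc i)}. of_nat (fact (n - i) div bell_denom (remove_part j (Suc i)) (n - i))
      * bell_monomial y (remove_part j (Suc i)) (n - i)) = bell_poly (n - i) k y" if i: "i \<le> n" for i
    unfolding bell_poly_eq
  proof (rule sum.reindex_bij_witness[where i="\<lambda>j. add_part j (Suc i)" and j="\<lambda>j. remove_part j (Suc i)"])
    fix j assume "j \<in> {j\<in>B. 0 < j (Suc i)}"
    then show "add_part (remove_part j (Suc i)) (Suc i) = j" "remove_part j (Suc i) \<in> bell_index (n - i) k"
      using add_remove_part bell_index_remove_part[OF _ i] by (auto simp: B_def)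
  next
    fix j assume "j \<in> bell_index (n - i) k"
    then show "add_part j (Suc i) \<in> {j\<in>B. 0 < j (Suc i)}"
      using bell_index_add_part[OF _ i] by (simp add: B_def add_part_def)
    show "remove_part (add_part j (Suc i)) (Suc i) = j" by (rule remove_add_part)
  qed simp
  have "bell_poly (Suc n) (Suc k) y = (\<Sum>j\<in>B. \<Sum>i\<in>{i\<in>{..n}. 0 < j (Suc i)}. F i j)"
    unfolding bell_poly_eq B_def[symmetric] by (rule sum.cong[OF refl]) (rule split_summand)
  also have "\<dots> = (\<Sum>i\<le>n. \<Sum>j\<in>{j\<in>B. 0 < j (Suc i)}. F i j)"
    using finite_bell_index unfolding B_def by (intro sum.swap_restrict) simp_all
  also have "\<dots> = (\<Sum>i\<le>n. of_nat (n choose i) * y (Suc i) * bell_poly (n - i) k y)"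
    unfolding F_def sum_distrib_left[symmetric] by (intro sum.cong) (simp_all add: reindex)
  finally show ?thesis .
qed

lemma bell_poly_0_left: "bell_poly 0 k y = (if k = 0 then 1 else 0)"
  by (simp add: bell_poly_eq bell_index_0 bell_denom_def bell_monomial_def)

lemma bell_poly_0_right: "bell_poly n 0 y = (if n = 0 then 1 else 0)"
  by (cases n) (simp add: bell_poly_0_left, simp add: bell_poly_eq bell_index_Suc_0)

lemma bell_poly_eq_0: "n < k \<Longrightarrow> bell_poly n k y = 0"
  by (simp add: bell_poly_eq bell_index_empty)

lemma bell_poly_diag: "bell_poly n n y = y 1 ^ n"
proof (induction n)
  case (Suc n)
  have "bell_poly (Suc n) (Suc n) y = (\<Sum>i\<le>n. if i = 0 then y 1 * bell_poly n n y else 0)"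
    unfolding bell_poly_Suc_Suc by (intro sum.cong) (auto simp: bell_poly_eq_0)
  with Suc.IH show ?case by simp
qed (simp add: bell_poly_0_left)

lemma bell_poly_1: "0 < n \<Longrightarrow> bell_poly n 1 y = y n"
proof (cases n)
  case (Suc m)
  have "bell_poly (Suc m) (Suc 0) y = (\<Sum>i\<le>m. if i = m then y (Suc m) else 0)"
    unfolding bell_poly_Suc_Suc by (intro sum.cong) (auto simp: bell_poly_0_right)
  with Suc show ?thesis by simp
qed simp

lemma bell_poly_comp_one: "bell_poly n k (comp_one :: nat \<Rightarrow> 'a::comm_ring_1) = (if n = k then 1 else 0)"
proof (induction n arbitrary: k)
  case (Suc n)
  note IH = Suc.IH
  show ?case
  proof (cases k)
    case (Suc k')
    have "bell_poly (Suc n) (Suc k') (comp_one :: nat \<Rightarrow> 'a)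
        = (\<Sum>i\<le>n. if i = 0 then bell_poly n k' comp_one else 0)"
      unfolding bell_poly_Suc_Suc by (intro sum.cong) (auto simp: comp_one_def)
    also have "\<dots> = bell_poly n k' comp_one" by simp
    also have "\<dots> = (if n = k' then 1 else 0)" by (rule IH)
    finally show ?thesis using Suc by simp
  qed (simp add: bell_poly_0_right)
qed (simp add: bell_poly_0_left)

section \<open>The Hurwitz product\<close>

lemma hurwitz_prod_0: "hurwitz_prod a b 0 = a 0 * b 0"
  by (simp add: hurwitz_prod_def)

lemma hurwitz_prod_commute: "hurwitz_prod a b = hurwitz_prod b a"
proof
  fix n
  have "hurwitz_prod a b n = (\<Sum>h=0..n. of_nat (n choose (n + 0 - h)) * a (n + 0 - h) * b (n - (n + 0 - h)))"
    unfolding hurwitz_prod_def atMost_atLeast0 by (rule sum.atLeastAtMost_rev)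
  also have "\<dots> = hurwitz_prod b a n"
    unfolding hurwitz_prod_def atMost_atLeast0
    by (intro sum.cong) (auto simp: binomial_symmetric[symmetric] ac_simps)
  finally show "hurwitz_prod a b n = hurwitz_prod b a n" .
qed

lemma hurwitz_prod_cong:
  assumes "\<And>m. m \<le> n \<Longrightarrow> a m = a' m" "\<And>m. m \<le> n \<Longrightarrow> b m = b' m"
  shows "hurwitz_prod a b n = hurwitz_prod a' b' n"
  unfolding hurwitz_prod_def using assms by (intro sum.cong) auto

lemma hurwitz_prod_add_left: "hurwitz_prod (\<lambda>m. a m + b m) c n = hurwitz_prod a c n + hurwitz_prod b c n"
  unfolding hurwitz_prod_def by (simp add: sum.distrib algebra_simps)

lemma hurwitz_prod_add_right: "hurwitz_prod c (\<lambda>m. a m + b m) n = hurwitz_prod c a n + hurwitz_prod c b n"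
  unfolding hurwitz_prod_def by (simp add: sum.distrib algebra_simps)

lemma hurwitz_prod_Suc:
  "hurwitz_prod a b (Suc n) = hurwitz_prod (shift_minus a) b n + hurwitz_prod a (shift_minus b) n"
proof -
  have "hurwitz_prod a b (Suc n) = (\<Sum>h\<le>n. of_nat (n choose h) * a (Suc h) * b (n - h))
      + (a 0 * b (Suc n) + (\<Sum>h\<le>n. of_nat (n choose Suc h) * a (Suc h) * b (n - h)))"
    unfolding hurwitz_prod_def by (subst sum.atMost_Suc_shift) (simp add: sum.distrib algebra_simps)
  also have "(\<Sum>h\<le>n. of_nat (n choose h) * a (Suc h) * b (n - h)) = hurwitz_prod (shift_minus a) b n"
    unfolding hurwitz_prod_def shift_minus_def ..
  also have "a 0 * b (Suc n) + (\<Sum>h\<le>n. of_nat (n choose Suc h) * a (Suc h) * b (n - h))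
      = hurwitz_prod a (shift_minus b) n"
  proof (cases n)
    case (Suc m)
    have "(\<Sum>h\<le>n. of_nat (n choose Suc h) * a (Suc h) * b (n - h))
        = (\<Sum>h\<le>m. of_nat (n choose Suc h) * a (Suc h) * b (n - h))"
      unfolding Suc by (simp only: sum.atMost_Suc) (simp add: binomial_eq_0 del: binomial_Suc_Suc)
    also have "\<dots> = (\<Sum>h\<le>m. of_nat (n choose Suc h) * a (Suc h) * b (Suc (n - Suc h)))"
      by (intro sum.cong) (simp_all add: Suc Suc_diff_le)
    finally have lhs: "(\<Sum>h\<le>n. of_nat (n choose Suc h) * a (Suc h) * b (n - h))
        = (\<Sum>h\<le>m. of_nat (n choose Suc h) * a (Suc h) * b (Suc (n - Suc h)))" .
    have "hurwitz_prod a (shift_minus b) n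
        = a 0 * b (Suc n) + (\<Sum>h\<le>m. of_nat (n choose Suc h) * a (Suc h) * b (Suc (n - Suc h)))"
      unfolding hurwitz_prod_def shift_minus_def Suc by (subst sum.atMost_Suc_shift) simp
    with lhs show ?thesis by simp
  qed (simp add: hurwitz_prod_def shift_minus_def)
  finally show ?thesis .
qed

lemma shift_minus_hurwitz_prod:
  "shift_minus (hurwitz_prod a b) = (\<lambda>n. hurwitz_prod (shift_minus a) b n + hurwitz_prod a (shift_minus b) n)"
  by (simp add: fun_eq_iff shift_minus_def hurwitz_prod_Suc)

lemma hurwitz_prod_assoc: "hurwitz_prod (hurwitz_prod a b) c = hurwitz_prod a (hurwitz_prod b c)"
proof
  fix n show "hurwitz_prod (hurwitz_prod a b) c n = hurwitz_prod a (hurwitz_prod b c) n"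
  proof (induction n arbitrary: a b c)
    case (Suc n)
    then show ?case
      by (simp add: hurwitz_prod_Suc shift_minus_hurwitz_prod hurwitz_prod_add_left
          hurwitz_prod_add_right add.assoc)
  qed (simp add: hurwitz_prod_0)
qed

lemma hurwitz_one_left: "hurwitz_prod hurwitz_one a = a"
proof
  fix n
  have "hurwitz_prod hurwitz_one a n = (\<Sum>h\<le>n. if h = 0 then a n else 0)"
    unfolding hurwitz_prod_def hurwitz_one_def by (intro sum.cong) auto
  then show "hurwitz_prod hurwitz_one a n = a n" by simp
qed

lemma hurwitz_inv_eq:
  assumes "hurwitz_prod a c = hurwitz_one"
  shows "hurwitz_inv a = c"
proof -
  have inv: "hurwitz_prod a (hurwitz_inv a) = hurwitz_one"
    unfolding hurwitz_inv_def using assms by (rule someI[where P="\<lambda>c. hurwitz_prod a c = hurwitz_one"])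
  have "hurwitz_inv a = hurwitz_prod (hurwitz_prod a c) (hurwitz_inv a)"
    by (simp add: assms hurwitz_one_left)
  also have "\<dots> = hurwitz_prod c (hurwitz_prod a (hurwitz_inv a))"
    by (simp only: hurwitz_prod_commute[of a c] hurwitz_prod_assoc)
  also have "\<dots> = c"
    by (simp only: inv hurwitz_prod_commute[of c] hurwitz_one_left)
  finally show ?thesis .
qed

section \<open>The composition product\<close>

lemma comp_prod_0: "comp_prod f g 0 = f 0"
  by (simp add: comp_prod_def bell_poly_0_left)

lemma comp_prod_trunc: "comp_prod f g n = (\<Sum>k\<le>m. f k * bell_poly n k g)" if "n \<le> m"
  unfolding comp_prod_def using that by (intro sum.mono_neutral_left) (auto simp: bell_poly_eq_0)

lemma shift_minus_comp_prod:
  "shift_minus (comp_prod f g) = hurwitz_prod (comp_prod (shift_minus f) g) (shift_minus g)"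
proof
  fix n
  have "shift_minus (comp_prod f g) n = (\<Sum>k\<le>n. f (Suc k) * bell_poly (Suc n) (Suc k) g)"
    unfolding shift_minus_def comp_prod_def by (subst sum.atMost_Suc_shift) (simp add: bell_poly_0_right)
  also have "\<dots> = (\<Sum>i\<le>n. \<Sum>k\<le>n. of_nat (n choose i) * g (Suc i) * (f (Suc k) * bell_poly (n - i) k g))"
    unfolding bell_poly_Suc_Suc sum_distrib_left by (subst sum.swap) (simp add: ac_simps)
  also have "\<dots> = (\<Sum>i\<le>n. of_nat (n choose i) * shift_minus g i * comp_prod (shift_minus f) g (n - i))"
    unfolding sum_distrib_left[symmetric] shift_minus_def
    by (intro sum.cong refl) (simp add: comp_prod_trunc[where m=n])
  also have "\<dots> = hurwitz_prod (comp_prod (shift_minus f) g) (shift_minus g) n"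
    by (simp add: hurwitz_prod_def hurwitz_prod_commute[of "comp_prod _ _"])
  finally show "shift_minus (comp_prod f g) n = hurwitz_prod (comp_prod (shift_minus f) g) (shift_minus g) n" .
qed

lemma comp_prod_Suc:
  "comp_prod f g (Suc n) = hurwitz_prod (comp_prod (shift_minus f) g) (shift_minus g) n"
  using fun_cong[OF shift_minus_comp_prod, of f g n] by (simp add: shift_minus_def)

lemma comp_prod_add_left: "comp_prod (\<lambda>m. a m + b m) c n = comp_prod a c n + comp_prod b c n"
  unfolding comp_prod_def by (simp add: sum.distrib algebra_simps)

lemma comp_prod_hurwitz_prod:
  "comp_prod (hurwitz_prod a b) c = hurwitz_prod (comp_prod a c) (comp_prod b c)"
proof
  fix n show "comp_prod (hurwitz_prod a b) c n = hurwitz_prod (comp_prod a c) (comp_prod b c) n"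
  proof (induction n arbitrary: a b rule: less_induct)
    case (less n)
    show ?case
    proof (cases n)
      case (Suc m)
      let ?S = shift_minus
      have "comp_prod (hurwitz_prod a b) c (Suc m)
          = hurwitz_prod (\<lambda>k. hurwitz_prod (comp_prod (?S a) c) (comp_prod b c) k
              + hurwitz_prod (comp_prod a c) (comp_prod (?S b) c) k) (?S c) m"
        unfolding comp_prod_Suc
      proof (rule hurwitz_prod_cong)
        fix k assume "k \<le> m"
        with Suc show "comp_prod (?S (hurwitz_prod a b)) c k
            = hurwitz_prod (comp_prod (?S a) c) (comp_prod b c) k
              + hurwitz_prod (comp_prod a c) (comp_prod (?S b) c) k"
          by (simp add: shift_minus_hurwitz_prod comp_prod_add_left less.IH)
      qed simp
      also have "\<dots> = hurwitz_prod (comp_prod a c) (comp_prod b c) (Suc m)"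
        unfolding hurwitz_prod_add_left hurwitz_prod_Suc shift_minus_comp_prod
        by (simp only: hurwitz_prod_assoc hurwitz_prod_commute[of "?S c"])
      finally show ?thesis unfolding Suc .
    qed (simp add: comp_prod_0 hurwitz_prod_0)
  qed
qed

lemma comp_prod_assoc: "comp_prod (comp_prod f g) h = comp_prod f (comp_prod g h)"
proof
  fix n show "comp_prod (comp_prod f g) h n = comp_prod f (comp_prod g h) n"
  proof (induction n arbitrary: f rule: less_induct)
    case (less n)
    show ?case
    proof (cases n)
      case (Suc m)
      let ?S = shift_minus
      have "comp_prod (comp_prod f g) h (Suc m)
          = hurwitz_prod (hurwitz_prod (comp_prod (comp_prod (?S f) g) h) (comp_prod (?S g) h)) (?S h) m"
        unfolding comp_prod_Suc shift_minus_comp_prod comp_prod_hurwitz_prod ..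
      also have "\<dots> = hurwitz_prod (hurwitz_prod (comp_prod (?S f) (comp_prod g h)) (comp_prod (?S g) h)) (?S h) m"
        using Suc less.IH by (intro hurwitz_prod_cong refl) simp_all
      also have "\<dots> = comp_prod f (comp_prod g h) (Suc m)"
        unfolding comp_prod_Suc shift_minus_comp_prod by (simp only: hurwitz_prod_assoc)
      finally show ?thesis unfolding Suc .
    qed (simp add: comp_prod_0)
  qed
qed

lemma comp_prod_comp_one: "comp_prod f comp_one = f"
proof
  fix n
  have "comp_prod f comp_one n = (\<Sum>k\<le>n. if k = n then f n else 0)"
    unfolding comp_prod_def by (intro sum.cong) (auto simp: bell_poly_comp_one)
  then show "comp_prod f comp_one n = f n" by simp
qed

lemma comp_one_comp_prod:
  assumes "g 0 = 0"
  shows "comp_prod comp_one g = g"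
proof
  fix n
  have "comp_prod comp_one g n = (\<Sum>k\<le>n. if k = 1 then bell_poly n 1 g else 0)"
    unfolding comp_prod_def by (intro sum.cong) (auto simp: comp_one_def)
  also have "\<dots> = (if 1 \<le> n then bell_poly n 1 g else 0)"
    by (simp add: sum.delta)
  also have "\<dots> = g n"
    using assms bell_poly_1[of n g] by (cases "n = 0") simp_all
  finally show "comp_prod comp_one g n = g n" .
qed

section \<open>Inverses\<close>

text \<open>The coefficient of \<open>d n\<close> in \<open>comp_prod d b n\<close> is \<open>bell_poly n n b = (b 1)\<^sup>n\<close>, so
  \<open>comp_prod d b = comp_one\<close> can be solved for \<open>d n\<close> by recursion when \<open>u\<close> inverts \<open>b 1\<close>.\<close>

fun comp_left_inv :: "'a \<Rightarrow> (nat \<Rightarrow> 'a::comm_ring_1) \<Rightarrow> nat \<Rightarrow> 'a" where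
  "comp_left_inv u b n =
    (if n = 0 then 0 else u ^ n * (comp_one n - (\<Sum>k<n. comp_left_inv u b k * bell_poly n k b)))"

declare comp_left_inv.simps [simp del]

lemma comp_left_inv_1: "comp_left_inv u b 1 = u"
  by (simp add: comp_left_inv.simps comp_one_def)

lemma comp_prod_comp_left_inv:
  assumes "b 1 * u = 1"
  shows "comp_prod (comp_left_inv u b) b = comp_one"
proof
  fix n
  show "comp_prod (comp_left_inv u b) b n = comp_one n"
  proof (cases "n = 0")
    case False
    have "comp_prod (comp_left_inv u b) b n
        = (\<Sum>k<n. comp_left_inv u b k * bell_poly n k b) + comp_left_inv u b n * bell_poly n n b"
      unfolding comp_prod_def lessThan_Suc_atMost[symmetric] sum.lessThan_Suc ..
    also have "comp_left_inv u b n * bell_poly n n b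
        = (b 1 * u) ^ n * (comp_one n - (\<Sum>k<n. comp_left_inv u b k * bell_poly n k b))"
      using False by (subst comp_left_inv.simps) (simp add: bell_poly_diag power_mult_distrib ac_simps)
    finally show ?thesis using assms by simp
  qed (simp add: comp_prod_0 comp_left_inv.simps comp_one_def)
qed

lemma comp_invertibleI:
  assumes "b 0 = 0" "b 1 dvd 1"
  shows "comp_invertible b"
proof -
  from assms(2) obtain u where u: "b 1 * u = 1" by (metis dvdE)
  define d where "d = comp_left_inv u b"
  have db: "comp_prod d b = comp_one"
    unfolding d_def using u by (rule comp_prod_comp_left_inv)
  have "d 1 * b 1 = 1"
    using u comp_left_inv_1[of u b] by (simp add: d_def mult.commute)
  then have ed: "comp_prod (comp_left_inv (b 1) d) d = comp_one"
    by (rule comp_prod_comp_left_inv)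
  have "comp_left_inv (b 1) d = comp_prod (comp_left_inv (b 1) d) (comp_prod d b)"
    by (simp add: db comp_prod_comp_one)
  also have "\<dots> = b"
    unfolding comp_prod_assoc[symmetric] ed by (rule comp_one_comp_prod[of b, OF assms(1)])
  finally have "comp_prod b d = comp_one"
    using ed by simp
  with db show ?thesis
    unfolding comp_invertible_def by blast
qed

lemma comp_inv_comp_prod:
  assumes "comp_invertible b"
  shows "comp_prod (comp_inv b) b = comp_one"
  using someI_ex[OF assms[unfolded comp_invertible_def]] unfolding comp_inv_def by blast

lemma shift_minus_comp_one: "shift_minus comp_one = hurwitz_one"
  by (simp add: fun_eq_iff shift_minus_def comp_one_def hurwitz_one_def)

theorem mainTheorem1:
  fixes a :: "nat \<Rightarrow> 'a::comm_ring_1"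
  assumes "a 0 dvd 1"
  shows "comp_invertible (shift_plus0 a)
    \<and> hurwitz_inv a = comp_prod (shift_minus (comp_inv (shift_plus0 a))) (shift_plus0 a)"
proof
  let ?b = "shift_plus0 a"
  have b0: "?b 0 = 0" and b1: "?b 1 = a 0" and Sb: "shift_minus ?b = a"
    by (simp_all add: fun_eq_iff shift_plus0_def shift_minus_def)
  show inv: "comp_invertible ?b"
    using b0 b1 assms by (intro comp_invertibleI) simp_all
  have "hurwitz_prod (comp_prod (shift_minus (comp_inv ?b)) ?b) a = shift_minus (comp_prod (comp_inv ?b) ?b)"
    by (simp add: shift_minus_comp_prod Sb)
  also have "\<dots> = hurwitz_one"
    by (simp add: comp_inv_comp_prod[OF inv] shift_minus_comp_one)
  finally show "hurwitz_inv a = comp_prod (shift_minus (comp_inv ?b)) ?b"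
    by (intro hurwitz_inv_eq) (simp add: hurwitz_prod_commute)
qed

end
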